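(* Let $g:[0,1]\to\mathbb R$ be defined by $g(p)=\frac{1}{2+p}\bigl(1-\exp(-\frac{2+p}{p}\ln\frac1{1-p})\bigr)$ for $p\in(0,1)$, with $g(0)=\frac12(1-e^{-2})$ and $g(1)=\frac13$ (the limiting values). Then $$\inf_{\mu}\ \max\Bigl\{\int_{[0,1]}g(q)\,d\mu(q),\ \int_{[0,1]}q\,d\mu(q)\Bigr\}\ =\ \frac{3e^2-3}{7e^2-3}\approx0.3934,$$ where the infimum ranges over all probability measures $\mu$ on $[0,1]$. The infimum is attained by the measure that puts mass $\frac{3e^2-3}{7e^2-3}$ on the point $1$ and the remaining mass on the point $0$. *)

theory Defs
  imports "HOL-Probability.Probability"
begin

definition gfun :: "real \<Rightarrow> real" where
  "gfun p = (if p = 0 then (1 - exp (-2)) / 2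
             else if p = 1 then 1 / 3
             else 1 / (2 + p) * (1 - exp (- ((2 + p) / p) * ln (1 / (1 - p)))))"

definition prob_measures_01 :: "real measure set" where
  "prob_measures_01 = {M. prob_space M \<and> space M = {0..1}
                          \<and> sets M = sets (restrict_space borel {0..1})}"

definition objective :: "real measure \<Rightarrow> real" where
  "objective M = max (integral\<^sup>L M gfun) (integral\<^sup>L M (\<lambda>q. q))"

end

theory Submission
  imports Defs
begin

text \<open>
  The function g lies above its chord on [0,1]: g p \<ge> (1 - p) g 0 + p g 1. This reduces to
  the bound e^-2 (1 - p)^2 on the exponential term, which comes from ln (1 - p) \<le> -2p/(2 - p),
  together with e^-2 \<ge> 1/9. Integrating against \<mu> with mean m, the first integral is at
  least a (1 - m) + m/3 with a = g 0, so the objective is at least max (a (1 - m) + m/3) m,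
  which is smallest where these two affine functions of m cross, at
  m = a / (a + 2/3) = (3e^2 - 3)/(7e^2 - 3). The two-point measure with that mass on 1 has
  mean m and first integral exactly a (1 - m) + m/3, so it attains the bound.
\<close>

lemma ln_one_minus_le:
  fixes p :: real
  assumes "0 \<le> p" "p < 1"
  shows "ln (1 - p) \<le> - 2 * p / (2 - p)"
proof -
  define f where "f x = ln (1 - x) + 2 * x / (2 - x)" for x :: real
  have f_deriv: "(f has_real_derivative (- 1 / (1 - x) + 4 / (2 - x)\<^sup>2)) (at x)" if "x < 1" for x
    unfolding f_def using that
    by (auto intro!: derivative_eq_intros simp: field_simps power2_eq_square)
  have f_deriv_nonpos: "- 1 / (1 - x) + 4 / (2 - x)\<^sup>2 \<le> 0" if "x < 1" for x :: real
  proof -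
    have "- 1 / (1 - x) + 4 / (2 - x)\<^sup>2 = - (x\<^sup>2) / ((1 - x) * (2 - x)\<^sup>2)"
      using that by (simp add: divide_simps) (simp add: algebra_simps power2_eq_square)
    also have "\<dots> \<le> 0"
      using that by (intro divide_nonpos_pos) auto
    finally show ?thesis .
  qed
  have "f p \<le> f 0"
  proof (rule DERIV_nonpos_imp_nonincreasing[of 0 p f])
    fix x assume "0 \<le> x" "x \<le> p"
    then have "x < 1"
      using assms by simp
    then show "\<exists>y. (f has_real_derivative y) (at x) \<and> y \<le> 0"
      using f_deriv f_deriv_nonpos by blast
  qed (use assms in simp)
  then show ?thesis
    by (simp add: f_def)
qed

lemma exp_gfun_exponent_le:
  fixes p :: real
  assumes "0 < p" "p < 1"
  shows "exp (- ((2 + p) / p) * ln (1 / (1 - p))) \<le> exp (- 2) * (1 - p)\<^sup>2"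
proof -
  have exponent: "- ((2 + p) / p) * ln (1 / (1 - p)) = ln (1 - p) * ((2 - p) / p) + 2 * ln (1 - p)"
    using assms by (simp add: ln_div field_simps)
  have "ln (1 - p) * ((2 - p) / p) \<le> (- 2 * p / (2 - p)) * ((2 - p) / p)"
    using assms ln_one_minus_le[of p] by (intro mult_right_mono) auto
  also have "\<dots> = - 2"
    using assms by (simp add: field_simps)
  finally have "exp (- ((2 + p) / p) * ln (1 / (1 - p))) \<le> exp (- 2 + 2 * ln (1 - p))"
    unfolding exponent by simp
  also have "\<dots> = exp (- 2) * exp (ln (1 - p)) ^ 2"
    by (simp add: exp_add[symmetric] exp_of_nat_mult[symmetric])
  also have "\<dots> = exp (- 2) * (1 - p)\<^sup>2"
    using assms by simp
  finally show ?thesis .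
qed

lemma gfun_0 [simp]: "gfun 0 = (1 - exp (- 2)) / 2"
  and gfun_1 [simp]: "gfun 1 = 1 / 3"
  by (simp_all add: gfun_def)

lemma exp_minus_two_bounds: "1 / 9 \<le> exp (- 2 :: real)" "exp (- 2 :: real) \<le> 1 / 3"
proof -
  have "exp (2 :: real) = exp 1 ^ 2"
    by (simp add: exp_of_nat_mult[symmetric])
  also have "\<dots> \<le> 3 ^ 2"
    using exp_le by (intro power_mono) auto
  finally have "exp (2 :: real) \<le> 9" by simp
  moreover have "3 \<le> exp (2 :: real)"
    using exp_ge_add_one_self[of 2] by simp
  ultimately show "1 / 9 \<le> exp (- 2 :: real)" "exp (- 2 :: real) \<le> 1 / 3"
    by (simp_all add: exp_minus field_simps)
qed

lemma gfun_above_chord: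
  assumes "0 \<le> p" "p \<le> 1"
  shows "(1 - p) * gfun 0 + p * gfun 1 \<le> gfun p"
proof (cases "p = 0 \<or> p = 1")
  case True
  then show ?thesis by auto
next
  case False
  with assms have p: "0 < p" "p < 1" by auto
  define E where "E = exp (- 2 :: real)"
  have "(1 - p) * gfun 0 + p * gfun 1 = (1 - E * (1 - p)\<^sup>2 - (1 - p) * p * (9 * E - 1) / 6) / (2 + p)"
    using p by (simp add: E_def field_simps power2_eq_square)
  also have "\<dots> \<le> (1 - E * (1 - p)\<^sup>2) / (2 + p)"
    using p exp_minus_two_bounds(1) unfolding E_def[symmetric]
    by (intro divide_right_mono) auto
  also have "\<dots> \<le> (1 - exp (- ((2 + p) / p) * ln (1 / (1 - p)))) / (2 + p)"
    using p exp_gfun_exponent_le[OF p] unfolding E_def by (intro divide_right_mono) auto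
  also have "\<dots> = gfun p"
    using p by (simp add: gfun_def)
  finally show ?thesis .
qed

lemma gfun_bounds:
  assumes "0 \<le> p" "p \<le> 1"
  shows "0 \<le> gfun p" "gfun p \<le> 1"
proof -
  have "0 \<le> (1 - p) * gfun 0 + p * gfun 1"
    using assms exp_minus_two_bounds by (intro add_nonneg_nonneg mult_nonneg_nonneg) auto
  then show "0 \<le> gfun p"
    using gfun_above_chord[OF assms] by linarith
  show "gfun p \<le> 1"
  proof (cases "p = 0 \<or> p = 1")
    case False
    then have "gfun p = (1 - exp (- ((2 + p) / p) * ln (1 / (1 - p)))) / (2 + p)"
      by (simp add: gfun_def)
    also have "\<dots> \<le> 1 / (2 + p)"
      using assms by (intro divide_right_mono) auto
    also have "\<dots> \<le> 1"
      using assms by simp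
    finally show ?thesis .
  qed (use exp_minus_two_bounds in auto)
qed

lemma borel_measurable_gfun [measurable]: "gfun \<in> borel_measurable borel"
  unfolding gfun_def by measurable

lemma max_affine_ge_crossing:
  fixes a b m :: real
  assumes "b \<le> a"
  shows "a / (1 + a - b) \<le> max (a * (1 - m) + b * m) m"
proof (cases "a / (1 + a - b) \<le> m")
  case False
  have pos: "0 < 1 + a - b" using assms by simp
  with False have "(1 + a - b) * m < a" by (simp add: field_simps)
  then have "0 \<le> (a - b) * (a - (1 + a - b) * m)"
    using assms by simp
  then have "a \<le> (1 + a - b) * (a * (1 - m) + b * m)"
    by (simp add: algebra_simps)
  then have "a / (1 + a - b) \<le> a * (1 - m) + b * m"
    using pos by (simp add: divide_le_eq mult.commute)
  then show ?thesis
    by simp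
qed simp

lemma affine_crossing_point:
  fixes a b :: real
  assumes "b \<le> a"
  shows "a / (1 + a - b) * b + (1 - a / (1 + a - b)) * a = a / (1 + a - b)"
proof -
  have "0 < 1 + a - b" using assms by simp
  then show ?thesis by (simp add: divide_simps) (simp add: algebra_simps)
qed

lemma gfun_crossing_eq: "gfun 0 / (1 + gfun 0 - gfun 1) = (3 * exp 2 - 3) / (7 * exp 2 - 3)"
proof -
  have "7 * exp 2 - (3 :: real) > 0"
    using exp_ge_add_one_self[of "2 :: real"] by simp
  then show ?thesis
    by (simp add: exp_minus field_simps)
qed

lemma prob_space_prob_measures_01: "M \<in> prob_measures_01 \<Longrightarrow> prob_space M"
  by (simp add: prob_measures_01_def)

lemma measurable_prob_measures_01:
  assumes "M \<in> prob_measures_01" "f \<in> borel_measurable borel"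
  shows "f \<in> borel_measurable M"
proof -
  have "sets M = sets (restrict_space borel {0..1 :: real})"
    using assms(1) by (simp add: prob_measures_01_def)
  then show ?thesis
    using measurable_restrict_space1[OF assms(2)] measurable_cong_sets by blast
qed

lemma integrable_prob_measures_01:
  fixes f :: "real \<Rightarrow> 'b::{banach, second_countable_topology}"
  assumes "M \<in> prob_measures_01" "f \<in> borel_measurable borel"
    and "\<And>x. x \<in> {0..1} \<Longrightarrow> norm (f x) \<le> B"
  shows "integrable M f"
proof -
  interpret prob_space M
    using assms(1) by (rule prob_space_prob_measures_01)
  show ?thesis
    using assms measurable_prob_measures_01
    by (intro integrable_const_bound[of _ B]) (auto simp: prob_measures_01_def)
qed

lemma objective_ge_crossing:
  assumes "M \<in> prob_measures_01"
  shows "gfun 0 / (1 + gfun 0 - gfun 1) \<le> objective M"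
proof -
  interpret prob_space M
    using assms by (rule prob_space_prob_measures_01)
  have space: "space M = {0..1}"
    using assms by (simp add: prob_measures_01_def)
  define m where "m = integral\<^sup>L M (\<lambda>q. q)"
  have int_id: "integrable M (\<lambda>q. q)"
    using assms by (rule integrable_prob_measures_01[where B = 1]) auto
  have int_g: "integrable M gfun"
    using assms gfun_bounds by (intro integrable_prob_measures_01[where B = 1]) auto
  have "gfun 0 * (1 - m) + gfun 1 * m = integral\<^sup>L M (\<lambda>q. (1 - q) * gfun 0 + q * gfun 1)"
    using int_id by (simp add: m_def prob_space algebra_simps)
  also have "\<dots> \<le> integral\<^sup>L M gfun"
    using int_id int_g gfun_above_chord by (intro integral_mono) (auto simp: space)
  finally have "max (gfun 0 * (1 - m) + gfun 1 * m) m \<le> objective M"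
    by (simp add: objective_def m_def)
  moreover have "gfun 0 / (1 + gfun 0 - gfun 1) \<le> max (gfun 0 * (1 - m) + gfun 1 * m) m"
    using exp_minus_two_bounds by (intro max_affine_ge_crossing) simp
  ultimately show ?thesis
    by linarith
qed

definition bernoulli_01 :: "real \<Rightarrow> real measure" where
  "bernoulli_01 p = distr (measure_pmf (bernoulli_pmf p)) (restrict_space borel {0..1}) of_bool"

lemma measurable_of_bool_01:
  "(of_bool :: bool \<Rightarrow> real) \<in> measurable (measure_pmf q) (restrict_space borel {0..1})"
  by (auto simp: of_bool_def)

lemma bernoulli_01_in_prob_measures_01: "bernoulli_01 p \<in> prob_measures_01"
  unfolding prob_measures_01_def bernoulli_01_def
  using measure_pmf.prob_space_distr[OF measurable_of_bool_01] by simp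

lemma measure_bernoulli_01_singleton:
  "measure (bernoulli_01 p) {of_bool b} = pmf (bernoulli_pmf p) b"
proof -
  have "measure (bernoulli_01 p) {of_bool b} = measure (measure_pmf (bernoulli_pmf p)) (of_bool -` {of_bool b :: real})"
    unfolding bernoulli_01_def
    by (subst measure_distr[OF measurable_of_bool_01]) (auto simp: sets_restrict_space)
  also have "of_bool -` {of_bool b :: real} = {b}"
    by auto
  finally show "measure (bernoulli_01 p) {of_bool b} = pmf (bernoulli_pmf p) b"
    by (simp add: measure_pmf_single)
qed

lemma integral_bernoulli_01:
  assumes "0 \<le> p" "p \<le> 1" "f \<in> borel_measurable borel"
  shows "integral\<^sup>L (bernoulli_01 p) f = p * f 1 + (1 - p) * f 0"
  unfolding bernoulli_01_def using assms
  by (subst integral_distr[OF measurable_of_bool_01]) (auto intro: measurable_restrict_space1)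

theorem mainTheorem9:
  shows "(INF M\<in>prob_measures_01. objective M) = (3 * exp 2 - 3) / (7 * exp 2 - 3)
         \<and> (\<exists>M\<in>prob_measures_01.
               measure M {1} = (3 * exp 2 - 3) / (7 * exp 2 - 3)
             \<and> measure M {0} = 1 - (3 * exp 2 - 3) / (7 * exp 2 - 3)
             \<and> objective M = (3 * exp 2 - 3) / (7 * exp 2 - 3))"
proof -
  define c where "c = gfun 0 / (1 + gfun 0 - gfun 1)"
  have c_01: "0 \<le> c" "c \<le> 1"
    using exp_minus_two_bounds by (auto simp: c_def field_simps)
  have c_fixed: "c * gfun 1 + (1 - c) * gfun 0 = c"
    unfolding c_def using exp_minus_two_bounds
    by (intro affine_crossing_point) simp
  have objective_c: "objective (bernoulli_01 c) = c"
    using c_01 c_fixed by (simp add: objective_def integral_bernoulli_01)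
  have "(INF M\<in>prob_measures_01. objective M) = c"
  proof (rule antisym)
    show "(INF M\<in>prob_measures_01. objective M) \<le> c"
      using objective_ge_crossing bernoulli_01_in_prob_measures_01 objective_c
      by (metis c_def bdd_belowI2 cINF_lower)
    show "c \<le> (INF M\<in>prob_measures_01. objective M)"
      using objective_ge_crossing bernoulli_01_in_prob_measures_01
      by (intro cINF_greatest) (auto simp: c_def)
  qed
  moreover have "measure (bernoulli_01 c) {1} = c" "measure (bernoulli_01 c) {0} = 1 - c"
    using measure_bernoulli_01_singleton[of c True] measure_bernoulli_01_singleton[of c False] c_01
    by simp_all
  ultimately show ?thesis
    using bernoulli_01_in_prob_measures_01 objective_c
    unfolding gfun_crossing_eq[folded c_def, symmetric] by blast
qed

end
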